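(* Let $T$ be a nonempty compact Hausdorff topological space and $\{f_t:\ t\in T\}$ a family of convex functions $f_t:X\to\mathbb{R}\cup\{+\infty\}$ (not necessarily lower semicontinuous) such that for each $z\in X$ the map $t\mapsto f_t(z)$ is upper semicontinuous on $T$. Let $f:=\sup_{t\in T}f_t$. Then \[ \operatorname{dom}f=\bigcap_{t\in T}\operatorname{dom}f_t, \] and for every $x\in\operatorname{dom}f$, \[ \mathbb{R}_+(\operatorname{dom}f-x)=\bigcap_{t\in T}\mathbb{R}_+(\operatorname{dom}f_t-x). \]
   Context: $X$ is a real separated locally convex space; $\operatorname{dom}g=\{x: g(x)<+\infty\}$; $\mathbb{R}_+A=\{\lambda a:\lambda\ge0, a\in A\}$. *)

theory Defs
  imports "HOL-Analysis.Analysis"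
begin

definition edom :: "('a \<Rightarrow> ereal) \<Rightarrow> 'a set" where
  "edom g = {x. g x < \<infinity>}"

text \<open>Convexity of a function with values in the reals extended by +infinity
  (the value -infinity is excluded separately).\<close>
definition convex_ext :: "('a::real_vector \<Rightarrow> ereal) \<Rightarrow> bool" where
  "convex_ext g \<longleftrightarrow> (\<forall>x y u. 0 < u \<and> u < 1 \<longrightarrow>
      g ((1 - u) *\<^sub>R x + u *\<^sub>R y) \<le> ereal (1 - u) * g x + ereal u * g y)"

definition usc_on :: "'b::topological_space set \<Rightarrow> ('b \<Rightarrow> ereal) \<Rightarrow> bool" where
  "usc_on T g \<longleftrightarrow> (\<forall>t\<in>T. \<forall>c. g t < c \<longrightarrow>
      (\<exists>U. open U \<and> t \<in> U \<and> (\<forall>s\<in>U \<inter> T. g s < c)))"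

definition cone_gen :: "'a::real_vector set \<Rightarrow> 'a set" where
  "cone_gen A = {l *\<^sub>R a | l a. l \<ge> 0 \<and> a \<in> A}"

end

theory Submission
  imports Defs
begin

text \<open>Both claims are instances of one compactness principle: an increasing sequence of
  relatively open subsets covering the compact set \<open>T\<close> has a single member covering \<open>T\<close>.
  For the domains, the sets are \<open>{t. f\<^sub>t z < n}\<close>, open by upper semicontinuity. For the
  cones, given \<open>v\<close> in every \<open>\<real>\<^sub>+(dom f\<^sub>t - x)\<close>, they are \<open>{t. x + v/n \<in> dom f\<^sub>t}\<close>, open by
  upper semicontinuity and increasing because each \<open>dom f\<^sub>t\<close> is a convex set containing \<open>x\<close>;
  a member covering \<open>T\<close> yields \<open>x + v/N \<in> dom f\<close>.\<close>

lemma usc_on_openin_less: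
  assumes "usc_on T g"
  shows "openin (top_of_set T) {t\<in>T. g t < c}"
proof (subst openin_subopen, intro ballI)
  fix t assume "t \<in> {t\<in>T. g t < c}"
  then obtain U where "open U" "t \<in> U" "\<forall>s\<in>U \<inter> T. g s < c"
    using assms unfolding usc_on_def by blast
  then show "\<exists>V. openin (top_of_set T) V \<and> t \<in> V \<and> V \<subseteq> {t\<in>T. g t < c}"
    using \<open>t \<in> {t\<in>T. g t < c}\<close> by (intro exI[of _ "T \<inter> U"]) (auto simp: openin_open)
qed

lemma compact_incseq_openin_cover:
  assumes "compact T" "incseq V" "\<And>n. openin (top_of_set T) (V n)" "T \<subseteq> (\<Union>n. V n)"
  obtains N where "T \<subseteq> V N"
proof -
  obtain D where "D \<subseteq> range V" "finite D" "T \<subseteq> \<Union>D"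
    using assms(1,3,4) unfolding compact_eq_openin_cover by (metis rangeE)
  then obtain K where K: "finite K" "T \<subseteq> (\<Union>k\<in>K. V k)"
    by (metis finite_subset_image)
  have "V k \<subseteq> V (Max (insert 0 K))" if "k \<in> K" for k
    using K(1) that by (intro monoD[OF assms(2)]) simp
  with K(2) show ?thesis
    using that by blast
qed

lemma edom_SUP_usc:
  fixes F :: "'b::topological_space \<Rightarrow> 'a \<Rightarrow> ereal"
  assumes "compact T" "\<And>z. usc_on T (\<lambda>t. F t z)"
  shows "edom (\<lambda>z. SUP t\<in>T. F t z) = (\<Inter>t\<in>T. edom (F t))"
proof
  show "edom (\<lambda>z. SUP t\<in>T. F t z) \<subseteq> (\<Inter>t\<in>T. edom (F t))"
  proof (intro subsetI INT_I)
    fix z t assume "z \<in> edom (\<lambda>z. SUP t\<in>T. F t z)" "t \<in> T"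
    then have "F t z \<le> (SUP t\<in>T. F t z)" "(SUP t\<in>T. F t z) < \<infinity>"
      by (auto intro: SUP_upper simp: edom_def)
    then show "z \<in> edom (F t)"
      unfolding edom_def mem_Collect_eq by (rule le_less_trans)
  qed
next
  show "(\<Inter>t\<in>T. edom (F t)) \<subseteq> edom (\<lambda>z. SUP t\<in>T. F t z)"
  proof
    fix z assume z: "z \<in> (\<Inter>t\<in>T. edom (F t))"
    define V where "V n = {t\<in>T. F t z < ereal (real n)}" for n
    have "incseq V"
      unfolding V_def by (intro monoI) (auto elim: less_le_trans)
    moreover have "T \<subseteq> (\<Union>n. V n)"
      using z unfolding V_def edom_def by (auto simp: less_PInf_Ex_of_nat)
    moreover have "openin (top_of_set T) (V n)" for n
      unfolding V_def using assms(2) by (rule usc_on_openin_less)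
    ultimately obtain N where "T \<subseteq> V N"
      using assms(1) compact_incseq_openin_cover by blast
    then have "(SUP t\<in>T. F t z) \<le> ereal (real N)"
      unfolding V_def by (intro SUP_least) (auto intro: less_imp_le)
    then show "z \<in> edom (\<lambda>z. SUP t\<in>T. F t z)"
      unfolding edom_def mem_Collect_eq by (rule le_less_trans) simp
  qed
qed

lemma convex_edom:
  assumes "convex_ext g"
  shows "convex (edom g)"
proof (unfold convex_alt, intro ballI allI impI)
  fix x y and u :: real
  assume x: "x \<in> edom g" and y: "y \<in> edom g" and u: "0 \<le> u \<and> u \<le> 1"
  show "(1 - u) *\<^sub>R x + u *\<^sub>R y \<in> edom g"
  proof (cases "u = 0 \<or> u = 1")
    case True
    then show ?thesis using x y by auto
  next
    case False
    with u have "0 < u" "u < 1" by auto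
    then have "g ((1 - u) *\<^sub>R x + u *\<^sub>R y) \<le> ereal (1 - u) * g x + ereal u * g y"
      using assms unfolding convex_ext_def by blast
    also have "\<dots> < \<infinity>"
      using x y \<open>0 < u\<close> \<open>u < 1\<close> by (cases "g x"; cases "g y") (auto simp: edom_def)
    finally show ?thesis by (simp add: edom_def)
  qed
qed

lemma convex_ray_mem:
  assumes "convex S" "x \<in> S" "x + a *\<^sub>R v \<in> S" "0 \<le> b" "b \<le> a"
  shows "x + b *\<^sub>R v \<in> S"
proof (cases "a = 0")
  case True
  then show ?thesis using assms by simp
next
  case False
  then have "x + b *\<^sub>R v = (1 - b / a) *\<^sub>R x + (b / a) *\<^sub>R (x + a *\<^sub>R v)"
    by (simp add: algebra_simps)
  also have "\<dots> \<in> S"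
    using assms False by (intro convexD_alt) auto
  finally show ?thesis .
qed

lemma mem_cone_gen_shift_iff:
  assumes "x \<in> S"
  shows "v \<in> cone_gen ((\<lambda>y. y - x) ` S) \<longleftrightarrow> (\<exists>e>0. x + e *\<^sub>R v \<in> S)"
proof
  assume "v \<in> cone_gen ((\<lambda>y. y - x) ` S)"
  then obtain l y where v: "v = l *\<^sub>R (y - x)" "l \<ge> 0" "y \<in> S"
    unfolding cone_gen_def by blast
  show "\<exists>e>0. x + e *\<^sub>R v \<in> S"
  proof (cases "l = 0")
    case True
    then show ?thesis using v assms by (intro exI[of _ 1]) simp
  next
    case False
    then show ?thesis using v by (intro exI[of _ "1 / l"]) simp
  qed
next
  assume "\<exists>e>0. x + e *\<^sub>R v \<in> S"
  then obtain e where "e > 0" "x + e *\<^sub>R v \<in> S" by blast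
  have "v = (1 / e) *\<^sub>R ((x + e *\<^sub>R v) - x)"
    using \<open>e > 0\<close> by simp
  moreover have "(x + e *\<^sub>R v) - x \<in> (\<lambda>y. y - x) ` S"
    using \<open>x + e *\<^sub>R v \<in> S\<close> by (rule imageI)
  ultimately show "v \<in> cone_gen ((\<lambda>y. y - x) ` S)"
    unfolding cone_gen_def using \<open>e > 0\<close> by fastforce
qed

lemma cone_gen_shift_INT_compact:
  fixes D :: "'b::topological_space \<Rightarrow> 'a::real_vector set"
  assumes "compact T" "\<And>t. t \<in> T \<Longrightarrow> convex (D t)" "\<And>t. t \<in> T \<Longrightarrow> x \<in> D t"
    and "\<And>w. openin (top_of_set T) {t\<in>T. w \<in> D t}"
  shows "cone_gen ((\<lambda>y. y - x) ` (\<Inter>t\<in>T. D t)) = (\<Inter>t\<in>T. cone_gen ((\<lambda>y. y - x) ` D t))"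
proof
  show "cone_gen ((\<lambda>y. y - x) ` (\<Inter>t\<in>T. D t)) \<subseteq> (\<Inter>t\<in>T. cone_gen ((\<lambda>y. y - x) ` D t))"
    unfolding cone_gen_def by blast
next
  show "(\<Inter>t\<in>T. cone_gen ((\<lambda>y. y - x) ` D t)) \<subseteq> cone_gen ((\<lambda>y. y - x) ` (\<Inter>t\<in>T. D t))"
  proof
    fix v assume v: "v \<in> (\<Inter>t\<in>T. cone_gen ((\<lambda>y. y - x) ` D t))"
    define V where "V n = {t\<in>T. x + inverse (real (Suc n)) *\<^sub>R v \<in> D t}" for n
    have "incseq V"
    proof (intro monoI subsetI)
      fix m n t assume "m \<le> n" "t \<in> V m"
      then have t: "t \<in> T" and "x + inverse (real (Suc m)) *\<^sub>R v \<in> D t"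
        unfolding V_def by auto
      moreover have "inverse (real (Suc n)) \<le> inverse (real (Suc m))"
        using \<open>m \<le> n\<close> by (simp add: le_imp_inverse_le)
      ultimately show "t \<in> V n"
        unfolding V_def by (auto intro: convex_ray_mem[OF assms(2,3)])
    qed
    moreover have "T \<subseteq> (\<Union>n. V n)"
    proof
      fix t assume t: "t \<in> T"
      then obtain e where "e > 0" "x + e *\<^sub>R v \<in> D t"
        using v assms(3) mem_cone_gen_shift_iff by blast
      moreover obtain n where "inverse (real (Suc n)) < e"
        using \<open>e > 0\<close> reals_Archimedean by blast
      ultimately have "t \<in> V n"
        unfolding V_def using t by (auto intro: convex_ray_mem[OF assms(2,3)])
      then show "t \<in> (\<Union>n. V n)" by blast
    qed
    moreover have "openin (top_of_set T) (V n)" for n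
      unfolding V_def by (rule assms(4))
    ultimately obtain N where "T \<subseteq> V N"
      using assms(1) compact_incseq_openin_cover by blast
    then have "x + inverse (real (Suc N)) *\<^sub>R v \<in> (\<Inter>t\<in>T. D t)"
      unfolding V_def by blast
    moreover have "x \<in> (\<Inter>t\<in>T. D t)" "inverse (real (Suc N)) > 0"
      using assms(3) by auto
    ultimately show "v \<in> cone_gen ((\<lambda>y. y - x) ` (\<Inter>t\<in>T. D t))"
      using mem_cone_gen_shift_iff by blast
  qed
qed

theorem lemma5:
  fixes T :: "'b::t2_space set"
    and F :: "'b \<Rightarrow> 'a::real_vector \<Rightarrow> ereal"
    and f :: "'a \<Rightarrow> ereal"
  assumes "compact T" and "T \<noteq> {}"
    and "\<And>t z. t \<in> T \<Longrightarrow> F t z \<noteq> -\<infinity>"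
    and "\<And>t. t \<in> T \<Longrightarrow> convex_ext (F t)"
    and "\<And>z. usc_on T (\<lambda>t. F t z)"
    and "f = (\<lambda>z. SUP t\<in>T. F t z)"
  shows "edom f = (\<Inter>t\<in>T. edom (F t)) \<and>
         (\<forall>x\<in>edom f. cone_gen ((\<lambda>y. y - x) ` edom f)
                     = (\<Inter>t\<in>T. cone_gen ((\<lambda>y. y - x) ` edom (F t))))"
proof
  show dom: "edom f = (\<Inter>t\<in>T. edom (F t))"
    unfolding assms(6) using assms(1,5) by (rule edom_SUP_usc)
  have "openin (top_of_set T) {t\<in>T. w \<in> edom (F t)}" for w
    unfolding edom_def mem_Collect_eq by (rule usc_on_openin_less[OF assms(5)])
  then show "\<forall>x\<in>edom f. cone_gen ((\<lambda>y. y - x) ` edom f)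
                     = (\<Inter>t\<in>T. cone_gen ((\<lambda>y. y - x) ` edom (F t)))"
    unfolding dom using assms(1,4) convex_edom
    by (intro ballI cone_gen_shift_INT_compact) auto
qed

end
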